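(* Let $m \equiv 1 \pmod 4$ with $m > 1$, $n = 3^m - 1$, $v = (3^{(m-1)/2}+1)/2$ and $\delta = (3^{(m-1)/2}+13)/2$. Then $\gcd(v,n) = 1$, and, setting $T_{(0,1,m)}(v) = \{ vi \bmod n : i \in T_{(0,1,m)}\}$, we have $\{n-(\delta-1), \ldots, n-2, n-1\} \subseteq T_{(0,1,m)}(v)$.
   Context: For an integer $0 \le j \le n-1$ with $3$-adic expansion $j = \sum_{t=0}^{m-1} j_t 3^t$, $j_t \in \{0,1,2\}$, let $w_3(j) = \sum_{t=0}^{m-1} j_t$. For distinct $i_1,i_2 \in \{0,1,2,3\}$, $T_{(i_1,i_2,m)} = \{1 \le j \le n-1 : w_3(j) \equiv i_1 \text{ or } i_2 \pmod 4\}$. For an integer $b$, $b \bmod n$ is the unique $b_0 \in \{0,\ldots,n-1\}$ with $b \equiv b_0 \pmod n$. *)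

theory Defs
  imports Main
begin

fun w3 :: "nat \<Rightarrow> nat" where
  "w3 j = (if j = 0 then 0 else j mod 3 + w3 (j div 3))"

declare w3.simps[simp del]

definition T :: "nat \<Rightarrow> nat \<Rightarrow> nat \<Rightarrow> nat set" where
  "T i1 i2 m = {j. 1 \<le> j \<and> j \<le> 3 ^ m - 2 \<and> (w3 j mod 4 = i1 mod 4 \<or> w3 j mod 4 = i2 mod 4)}"

definition Tscaled :: "nat \<Rightarrow> nat \<Rightarrow> nat \<Rightarrow> nat \<Rightarrow> nat set" where
  "Tscaled i1 i2 m v = (\<lambda>i. (v * i) mod (3 ^ m - 1)) ` T i1 i2 m"

end

theory Submission
  imports Defs
begin

text \<open>Write \<open>m = 4k + 1\<close> and \<open>q = 3^(2k)\<close>, so that \<open>n = 3q^2 - 1\<close>, \<open>2v = q + 1\<close>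
  and \<open>\<delta> = v + 6\<close>.  Since \<open>q \<equiv> 1 (mod 4)\<close>, \<open>v\<close> is odd, and \<open>n = 12v(v - 1) + 2\<close> is
  coprime to \<open>v\<close>.  The identity \<open>6v(q - 1) = n - 2\<close> gives \<open>v \<cdot> 3c(q - 1) \<equiv> -c (mod n)\<close>
  for even \<open>c\<close>, so \<open>n - t\<close> is the image of \<open>3t(q - 1)\<close> for even \<open>t\<close>, of \<open>n - 1 - 3c(q - 1)\<close>
  for \<open>t = v - c\<close>, and of \<open>3c(q - 1) - 1\<close> for \<open>t = v + c\<close> with \<open>c \<in> {2, 4}\<close>.  In base 3,
  \<open>c(q - 1)\<close> for \<open>0 < c \<le> q\<close> consists of the digits of \<open>c - 1\<close> followed by the
  \<open>2k\<close>-digit complement of \<open>c - 1\<close>, so its digit sum is \<open>4k\<close>; this puts the digit sums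
  of the three witnesses in the classes 0, 1, 1 mod 4.\<close>

lemma w3_0 [simp]: "w3 0 = 0"
  by (simp add: w3.simps)

lemma w3_digit: "d < 3 \<Longrightarrow> w3 (3 * y + d) = d + w3 y"
  by (cases "3 * y + d = 0") (simp_all add: w3.simps[of "3 * y + d"])

lemma w3_times_3: "w3 (3 * y) = w3 y"
  using w3_digit[of 0 y] by simp

lemma w3_append: "y < 3 ^ L \<Longrightarrow> w3 (x * 3 ^ L + y) = w3 x + w3 y"
proof (induction L arbitrary: y)
  case (Suc L)
  have "x * 3 ^ Suc L + y = 3 * (x * 3 ^ L + y div 3) + y mod 3"
    by simp
  then have "w3 (x * 3 ^ Suc L + y) = y mod 3 + w3 (x * 3 ^ L + y div 3)"
    by (simp only: w3_digit mod_less_divisor zero_less_numeral)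
  moreover have "y div 3 < 3 ^ L"
    using Suc.prems by simp
  moreover have "w3 y = y mod 3 + w3 (y div 3)"
    using w3_digit[of "y mod 3" "y div 3"] by simp
  ultimately show ?case
    using Suc.IH by simp
qed simp

lemma w3_complement: "x < 3 ^ L \<Longrightarrow> w3 (3 ^ L - 1 - x) + w3 x = 2 * L"
proof (induction L arbitrary: x)
  case (Suc L)
  have "x div 3 < 3 ^ L"
    using Suc.prems by simp
  then have "3 ^ Suc L - 1 - x = 3 * (3 ^ L - 1 - x div 3) + (2 - x mod 3)"
    by (simp add: algebra_simps)
  then have "w3 (3 ^ Suc L - 1 - x) = (2 - x mod 3) + w3 (3 ^ L - 1 - x div 3)"
    by (simp only: w3_digit)
  moreover have "w3 x = x mod 3 + w3 (x div 3)"
    using w3_digit[of "x mod 3" "x div 3"] by simp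
  moreover have "x mod 3 \<le> 2"
    by simp
  ultimately show ?case
    using Suc.IH[OF \<open>x div 3 < 3 ^ L\<close>] by (simp only: mult_Suc_right) linarith
qed simp

lemma w3_mult_pow3_minus_1:
  assumes "0 < x" "x \<le> 3 ^ L"
  shows "w3 (x * (3 ^ L - 1)) = 2 * L"
proof -
  have "x * (3 ^ L - 1) = (x - 1) * 3 ^ L + (3 ^ L - 1 - (x - 1))"
    using assms by (simp add: algebra_simps diff_mult_distrib diff_mult_distrib2)
  also have "w3 \<dots> = w3 (x - 1) + w3 (3 ^ L - 1 - (x - 1))"
    by (rule w3_append) (use assms in simp)
  also have "\<dots> = 2 * L"
  proof -
    have "x - 1 < 3 ^ L"
      using assms by linarith
    then show ?thesis
      using w3_complement[of "x - 1" L] by simp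
  qed
  finally show ?thesis .
qed

lemma w3_pred:
  assumes "c mod 3 \<noteq> 0"
  shows "w3 c = w3 (c - 1) + 1"
proof -
  have c: "c = 3 * (c div 3) + c mod 3"
    by simp
  then have "c - 1 = 3 * (c div 3) + (c mod 3 - 1)"
    using assms by linarith
  then have "w3 (c - 1) = (c mod 3 - 1) + w3 (c div 3)"
    using w3_digit[of "c mod 3 - 1" "c div 3"] by simp
  moreover have "w3 c = c mod 3 + w3 (c div 3)"
    using w3_digit[of "c mod 3" "c div 3"] c by simp
  ultimately show ?thesis
    using assms by simp
qed

lemma neg_mem_TscaledI:
  assumes "i \<in> T i1 i2 m" "0 < t" "t < 3 ^ m - 1"
    and "int v * int i + int t = K * (3 ^ m - 1)"
  shows "3 ^ m - 1 - t \<in> Tscaled i1 i2 m v"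
proof -
  have n: "int (3 ^ m - 1) = 3 ^ m - 1"
    by (simp add: of_nat_diff)
  have "int ((v * i) mod (3 ^ m - 1)) = (K * (3 ^ m - 1) - int t) mod (3 ^ m - 1)"
    using assms(4) by (simp add: of_nat_mod n flip: eq_diff_eq)
  also have "\<dots> = (- int t) mod (3 ^ m - 1)"
    by (simp add: mod_diff_left_eq[symmetric])
  also have "\<dots> = int (3 ^ m - 1 - t)"
  proof -
    have "(- int t) mod (3 ^ m - 1) = (3 ^ m - 1 - int t) mod (3 ^ m - 1)"
      using mod_add_self1[of "3 ^ m - 1" "- int t"] by simp
    also have "\<dots> = 3 ^ m - 1 - int t"
      using assms(2,3) n by (intro mod_pos_pos_trivial) linarith+
    finally show ?thesis
      using assms(3) n by simp
  qed
  finally have "(v * i) mod (3 ^ m - 1) = 3 ^ m - 1 - t"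
    by (simp only: of_nat_eq_iff)
  with assms(1) show ?thesis
    unfolding Tscaled_def by (metis image_eqI)
qed

lemma neg_mem_Tscaled_01I:
  fixes k v i t :: nat and K :: int
  defines "q \<equiv> 3 ^ (2 * k) :: nat"
  assumes "0 < i" "i < 3 * q ^ 2 - 1" "w3 i mod 4 = 0 \<or> w3 i mod 4 = 1"
    and "9 \<le> q" "0 < t" "t \<le> 2 * q"
    and "int v * int i + int t = K * (3 * int q ^ 2 - 1)"
  shows "3 * q ^ 2 - 1 - t \<in> Tscaled 0 1 (4 * k + 1) v"
proof -
  have pow: "3 ^ (4 * k + 1) = 3 * q ^ 2" "(3 :: int) ^ (4 * k + 1) = 3 * int q ^ 2"
    unfolding q_def by (simp_all flip: power_mult)
  have "i \<in> T 0 1 (4 * k + 1)"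
    using assms(2-4) unfolding T_def pow by auto
  moreover have "9 * q \<le> q ^ 2"
    using assms(5) by (simp add: power2_eq_square)
  ultimately show ?thesis
    using neg_mem_TscaledI[of i 0 1 "4 * k + 1" t v K] assms(5-8) unfolding pow by simp
qed

lemma neg_even_mem_Tscaled_01:
  fixes k v t :: nat
  defines "q \<equiv> 3 ^ (2 * k) :: nat"
  assumes "9 \<le> q" "2 * v = q + 1" "even t" "0 < t" "t \<le> q + 1"
  shows "3 * q ^ 2 - 1 - t \<in> Tscaled 0 1 (4 * k + 1) v"
proof -
  obtain s where t: "t = 2 * s"
    using assms(4) by blast
  have qq: "(q + 1) * (q - 1) = q ^ 2 - 1"
    using assms(2) by (simp add: algebra_simps diff_mult_distrib2 power2_eq_square)
  define i where "i = 3 * (t * (q - 1))"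
  have "w3 i mod 4 = 0"
  proof (cases "t \<le> q")
    case True
    then show ?thesis
      using w3_mult_pow3_minus_1[of t "2 * k"] assms(5) unfolding i_def q_def w3_times_3 by simp
  next
    case False
    then have "t * (q - 1) = q ^ 2 - 1"
      using assms(6) qq by (simp add: le_Suc_eq)
    also have "q ^ 2 - 1 = 3 ^ (4 * k) - 1 - 0"
      unfolding q_def by (simp flip: power_mult)
    finally show ?thesis
      using w3_complement[of 0 "4 * k"] unfolding i_def w3_times_3 by simp
  qed
  moreover have "i < 3 * q ^ 2 - 1"
  proof -
    have "i \<le> 3 * ((q + 1) * (q - 1))"
      unfolding i_def using assms(6) by (intro mult_le_mono2 mult_le_mono1)
    then show ?thesis
      using qq assms(2) by (simp add: power2_eq_square)
  qed
  moreover have "0 < i"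
    unfolding i_def using assms(2,5) by simp
  moreover have "int v * int i + int t = int s * (3 * int q ^ 2 - 1)"
  proof -
    have "2 * int v = int q + 1" "int t = 2 * int s" "int i = 3 * (int t * (int q - 1))"
      using assms(2,3) unfolding i_def t by (simp_all add: of_nat_diff)
    then show ?thesis
      by algebra
  qed
  ultimately show ?thesis
    using neg_mem_Tscaled_01I[of i k t v "int s", folded q_def] assms(2,5,6) by simp
qed

lemma neg_odd_below_mem_Tscaled_01:
  fixes k v c :: nat
  defines "q \<equiv> 3 ^ (2 * k) :: nat"
  assumes "9 \<le> q" "2 * v = q + 1" "even c" "c < v"
  shows "3 * q ^ 2 - 1 - (v - c) \<in> Tscaled 0 1 (4 * k + 1) v"
proof -
  obtain s where c: "c = 2 * s"
    using assms(4) by blast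
  define x where "x = 3 * (c * (q - 1)) + 1"
  define i where "i = 3 * q ^ 2 - 1 - x"
  have pow: "3 ^ (4 * k + 1) = 3 * q ^ 2"
    unfolding q_def by (simp flip: power_mult)
  have int_x: "int x = 3 * (int c * (int q - 1)) + 1"
    unfolding x_def using assms(2) by (simp add: of_nat_diff)
  have "int c * (int q - 1) \<le> (int q - 1) * (int q - 1)"
    using assms(3,5) by (intro mult_right_mono) simp_all
  then have "int x < 3 * int q ^ 2 - 1"
    using assms(2) int_x by (simp add: power2_eq_square algebra_simps)
  also have "3 * int q ^ 2 - 1 = int (3 * q ^ 2 - 1)"
    using assms(2) by (simp add: of_nat_diff)
  finally have x: "x < 3 * q ^ 2 - 1"
    by simp
  have "w3 x = 1 + w3 (c * (q - 1))"
    unfolding x_def using w3_digit[of 1 "c * (q - 1)"] by simp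
  moreover have "w3 (c * (q - 1)) = 0 \<or> w3 (c * (q - 1)) = 4 * k"
    using w3_mult_pow3_minus_1[of c "2 * k"] assms(3,5) unfolding q_def by fastforce
  moreover have "w3 i + w3 x = 2 * (4 * k + 1)"
    unfolding i_def using w3_complement[of x "4 * k + 1"] x pow by simp
  ultimately have "w3 i mod 4 = 1"
    by presburger
  moreover have "int v * int i + int (v - c) = (int v - int s) * (3 * int q ^ 2 - 1)"
  proof -
    have "2 * int v = int q + 1" "int c = 2 * int s" "int (v - c) = int v - int c"
      "int i = 3 * int q ^ 2 - 1 - int x"
      using assms(3,5) x unfolding i_def c by (simp_all add: of_nat_diff)
    then show ?thesis
      using int_x by algebra
  qed
  moreover have "0 < i" "i < 3 * q ^ 2 - 1"
    unfolding i_def using x by (simp_all add: x_def)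
  ultimately show ?thesis
    using neg_mem_Tscaled_01I[of i k "v - c" v "int v - int s", folded q_def] assms(2,3,5) by simp
qed

lemma neg_odd_above_mem_Tscaled_01:
  fixes k v c :: nat
  defines "q \<equiv> 3 ^ (2 * k) :: nat"
  assumes "9 \<le> q" "2 * v = q + 1" "even c" "c mod 3 \<noteq> 0" "c < q"
  shows "3 * q ^ 2 - 1 - (v + c) \<in> Tscaled 0 1 (4 * k + 1) v"
proof -
  obtain s where c: "c = 2 * s"
    using assms(4) by blast
  have "0 < c"
    using assms(5) by (cases "c = 0") auto
  define i where "i = 3 * (c * (q - 1) - 1) + 2"
  have int_i: "int i = 3 * (int c * (int q - 1) - 1) + 2"
    unfolding i_def using \<open>0 < c\<close> assms(2) by (simp add: of_nat_diff)
  have "w3 i = 2 + w3 (c * (q - 1) - 1)"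
    unfolding i_def using w3_digit[of 2 "c * (q - 1) - 1"] by simp
  also have "c * (q - 1) - 1 = (c - 1) * 3 ^ (2 * k) + (3 ^ (2 * k) - 1 - c)"
    using \<open>0 < c\<close> assms(6) unfolding q_def
    by (simp add: algebra_simps diff_mult_distrib diff_mult_distrib2)
  also have "w3 \<dots> = w3 (c - 1) + w3 (q - 1 - c)"
    unfolding q_def by (rule w3_append) simp
  finally have "w3 i = 2 + w3 (c - 1) + w3 (q - 1 - c)"
    by simp
  moreover have "w3 (q - 1 - c) + w3 c = 4 * k"
    using w3_complement[of c "2 * k"] assms(6) unfolding q_def by simp
  moreover have "w3 c = w3 (c - 1) + 1"
    using assms(5) by (rule w3_pred)
  ultimately have "w3 i mod 4 = 1"
    by presburger
  moreover have "i < 3 * q ^ 2 - 1"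
  proof -
    have "int c * (int q - 1) \<le> (int q - 1) * (int q - 1)"
      using assms(6) by (intro mult_right_mono) simp_all
    then have "int i < 3 * int q ^ 2 - 1"
      using int_i assms(2) by (simp add: power2_eq_square algebra_simps)
    also have "3 * int q ^ 2 - 1 = int (3 * q ^ 2 - 1)"
      using assms(2) by (simp add: of_nat_diff)
    finally show ?thesis
      by simp
  qed
  moreover have "int v * int i + int (v + c) = int s * (3 * int q ^ 2 - 1)"
  proof -
    have "2 * int v = int q + 1" "int c = 2 * int s" "int (v + c) = int v + int c"
      using assms(3) unfolding c by simp_all
    then show ?thesis
      using int_i by algebra
  qed
  moreover have "0 < i"
    unfolding i_def by simp
  ultimately show ?thesis
    using neg_mem_Tscaled_01I[of i k "v + c" v "int s", folded q_def] \<open>0 < c\<close> assms(2,3,6)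
    by simp
qed

lemma neg_mem_Tscaled_01_if_le:
  fixes k v t :: nat
  defines "q \<equiv> 3 ^ (2 * k) :: nat"
  assumes "9 \<le> q" "2 * v = q + 1" "odd v" "0 < t" "t \<le> v + 5"
  shows "3 * q ^ 2 - 1 - t \<in> Tscaled 0 1 (4 * k + 1) v"
proof -
  have "even t \<or> odd t \<and> t \<le> v \<or> t = v + 2 \<or> t = v + 4"
    using assms(4,6) by presburger
  then consider "even t" | "odd t" "t \<le> v" | "t = v + 2" | "t = v + 4"
    by blast
  then show ?thesis
  proof cases
    case 1
    then show ?thesis
      using neg_even_mem_Tscaled_01[of k v t] assms unfolding q_def by simp
  next
    case 2
    then have "t = v - (v - t)" "even (v - t)" "v - t < v"
      using assms(4,5) by presburger+
    then show ?thesis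
      using neg_odd_below_mem_Tscaled_01[of k v "v - t"] assms(2,3) unfolding q_def by metis
  next
    case 3
    then show ?thesis
      using neg_odd_above_mem_Tscaled_01[of k v 2] assms(2,3) unfolding q_def by simp
  next
    case 4
    then show ?thesis
      using neg_odd_above_mem_Tscaled_01[of k v 4] assms(2,3) unfolding q_def by simp
  qed
qed

lemma gcd_half_succ_three_sq_minus_1:
  fixes v q :: nat
  assumes "2 * v = q + 1" "odd v"
  shows "gcd v (3 * q ^ 2 - 1) = 1"
proof -
  have "int (3 * q ^ 2 - 1) = int v * (12 * (int v - 1)) + 2"
  proof -
    have "0 < q"
      using assms(1) by presburger
    then have "int (3 * q ^ 2 - 1) = 3 * int q ^ 2 - 1" "2 * int v = int q + 1"
      using assms(1) by (simp_all add: of_nat_diff)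
    then show ?thesis
      by algebra
  qed
  also have "\<dots> = int ((12 * (v - 1)) * v + 2)"
    using assms(1) by (simp add: of_nat_diff)
  finally have "gcd v (3 * q ^ 2 - 1) = gcd v 2"
    by (simp only: of_nat_eq_iff gcd_add_mult)
  also have "\<dots> = 1"
    using assms(2) by (metis coprime_iff_gcd_eq_1 coprime_right_2_iff_odd)
  finally show ?thesis .
qed

lemma pow3_even_mod_4: "(3 :: nat) ^ (2 * k) mod 4 = 1"
  using power_mod[of "9 :: nat" 4 k] by (simp add: power_mult)

theorem lemma5:
  fixes m n v \<delta> :: nat
  assumes "m mod 4 = 1" and "m > 1"
    and "n = 3 ^ m - 1"
    and "v = (3 ^ ((m - 1) div 2) + 1) div 2"
    and "\<delta> = (3 ^ ((m - 1) div 2) + 13) div 2"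
  shows "gcd v n = 1 \<and> {n - (\<delta> - 1) .. n - 1} \<subseteq> Tscaled 0 1 m v"
proof -
  define k where "k = m div 4"
  have m: "m = 4 * k + 1" "0 < k"
    unfolding k_def using assms(1,2) by presburger+
  define q :: nat where "q = 3 ^ (2 * k)"
  have q: "9 \<le> q"
    unfolding q_def using m(2) self_le_power[of 9 k] by (simp add: power_mult)
  have "v = (q + 1) div 2" "\<delta> = (q + 13) div 2"
    using assms(4,5) m(1) unfolding q_def by simp_all
  then have v: "2 * v = q + 1" "odd v" and \<delta>: "\<delta> = v + 6"
    using pow3_even_mod_4[of k] unfolding q_def[symmetric] by presburger+
  have n: "n = 3 * q ^ 2 - 1"
    using assms(3) m(1) unfolding q_def by (simp flip: power_mult)
  have "{n - (\<delta> - 1) .. n - 1} \<subseteq> Tscaled 0 1 m v"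
  proof
    fix x
    assume "x \<in> {n - (\<delta> - 1) .. n - 1}"
    moreover have "0 < n"
      using assms(2,3) one_less_power[of "3 :: nat" m] by simp
    ultimately have "x = 3 * q ^ 2 - 1 - (n - x)" "0 < n - x" "n - x \<le> v + 5"
      using n \<delta> by auto
    then show "x \<in> Tscaled 0 1 m v"
      using neg_mem_Tscaled_01_if_le[of k v "n - x"] q v m(1) unfolding q_def by metis
  qed
  then show ?thesis
    using gcd_half_succ_three_sq_minus_1[OF v] n by simp
qed

end
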